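(* For every $i\in\{1,2,3,4\}$, every unit ball $b$ and every configuration $\sigma_b$ on $b$ belonging to the class $\mathcal{C}_i$, there exists a periodic configuration $\varphi:V\to\{-1,1\}$ with period not exceeding 2 such that $\varphi_{b'}\in\mathcal{C}_i$ for every unit ball $b'$ and $\varphi_b=\sigma_b$.
   Context: Let $G_2$ be the free product of three cyclic groups of order two with generators $a_1,a_2,a_3$; its elements are the vertices $V$ of the Cayley tree of order 2, with $g,h$ adjacent iff $h=ga_i$ for some $i$, and $d$ the graph distance. A configuration $\varphi:V\to\{-1,1\}$ is periodic with period not exceeding 2 if there is a subgroup $G^*\subset G_2$ of index at most 2 such that $\varphi(gh)=\varphi(h)$ for all $g\in G^*$, $h\in G_2$. A unit ball is $b=\{y: d(x,y)\le1\}$ (center $x$ and its three neighbours, the leaves); $\varphi_b$ denotes the restriction to $b$. A configuration on a unit ball belongs to $\mathcal{C}_1$, $\mathcal{C}_2$, $\mathcal{C}_4$, $\mathcal{C}_3$ according as exactly $3$, $2$, $1$, $0$ of its leaves carry the same value as its center. *)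

theory Defs
  imports "HOL-Algebra.Coset"
begin

text \<open>The group G_2 = Z2 * Z2 * Z2 with generators a_1, a_2, a_3, encoded as a_i = [i-1]
  for i-1 in {0,1,2}. Elements are reduced words: lists over {0,1,2} with no two
  consecutive equal letters.\<close>

definition reduced :: "nat list \<Rightarrow> bool" where
  "reduced w \<longleftrightarrow> set w \<subseteq> {0,1,2} \<and> (\<forall>k. Suc k < length w \<longrightarrow> w ! k \<noteq> w ! Suc k)"

definition gstep :: "nat list \<Rightarrow> nat \<Rightarrow> nat list" where
  "gstep w a = (if w \<noteq> [] \<and> last w = a then butlast w else w @ [a])"

definition gmul :: "nat list \<Rightarrow> nat list \<Rightarrow> nat list" where
  "gmul g h = foldl gstep g h"

definition G2 :: "nat list monoid" where
  "G2 = \<lparr>carrier = {w. reduced w}, mult = gmul, one = []\<rparr>"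

definition unit_ball :: "nat list \<Rightarrow> nat list set" where
  "unit_ball x = insert x {gstep x i | i. i \<in> {0,1,2::nat}}"

definition agree_count :: "(nat list \<Rightarrow> int) \<Rightarrow> nat list \<Rightarrow> nat" where
  "agree_count s x = card {i \<in> {0,1,2::nat}. s (gstep x i) = s x}"

definition in_class :: "nat \<Rightarrow> (nat list \<Rightarrow> int) \<Rightarrow> nat list \<Rightarrow> bool" where
  "in_class i s x \<longleftrightarrow> agree_count s x =
     (if i = 1 then 3 else if i = 2 then 2 else if i = 3 then 0 else if i = 4 then 1 else 42)"

definition periodic_le2 :: "(nat list \<Rightarrow> int) \<Rightarrow> bool" where
  "periodic_le2 \<phi> \<longleftrightarrow> (\<exists>H. subgroup H G2 \<and> finite (rcosets\<^bsub>G2\<^esub> H) \<and> card (rcosets\<^bsub>G2\<^esub> H) \<le> 2 \<and>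
      (\<forall>g\<in>H. \<forall>h\<in>carrier G2. \<phi> (g \<otimes>\<^bsub>G2\<^esub> h) = \<phi> h))"

end

theory Submission
  imports Defs
begin

text \<open>Let S be the set of generators a along which \<sigma> changes sign between the centre x and
  the leaf x a. Colour every vertex by the parity of the number of letters from S in its
  reduced word, and put \<phi> = \<sigma> x on the vertices of the same parity as x and \<phi> = -\<sigma> x on
  the others. Every edge with label in S joins vertices of different parity and every other
  edge joins vertices of equal parity, so every unit ball has the same number 3 - |S| of
  agreeing leaves as the given one. The parity is a homomorphism from G_2 onto a group of
  order at most 2 and \<phi> factors through it, so \<phi> is invariant under its kernel, a subgroup
  of index at most 2.\<close>

lemma reduced_iff_successively: "reduced w \<longleftrightarrow> set w \<subseteq> {0,1,2} \<and> successively (\<noteq>) w"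
  unfolding reduced_def successively_conv_nth by simp

lemma reduced_Nil [simp]: "reduced []"
  by (simp add: reduced_iff_successively)

lemma reduced_snoc:
  "reduced (w @ [a]) \<longleftrightarrow> reduced w \<and> a \<in> {0,1,2} \<and> (w \<noteq> [] \<longrightarrow> last w \<noteq> a)"
  by (auto simp: reduced_iff_successively successively_append_iff)

lemma reduced_Cons:
  "reduced (a # w) \<longleftrightarrow> a \<in> {0,1,2} \<and> reduced w \<and> (w \<noteq> [] \<longrightarrow> hd w \<noteq> a)"
  by (cases w) (auto simp: reduced_iff_successively)

lemma reduced_rev: "reduced w \<Longrightarrow> reduced (rev w)"
  by (induction w) (auto simp: reduced_Cons reduced_snoc last_rev)

lemma set_reduced: "reduced w \<Longrightarrow> set w \<subseteq> {0,1,2}"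
  by (simp add: reduced_def)

lemma reduced_gstep:
  assumes "reduced w" "a \<in> {0,1,2}"
  shows "reduced (gstep w a)"
proof (cases "w \<noteq> [] \<and> last w = a")
  case True
  then have "reduced (butlast w @ [last w])"
    using assms(1) by (metis append_butlast_last_id)
  then show ?thesis
    using True by (simp add: gstep_def reduced_snoc)
next
  case False
  then have "gstep w a = w @ [a]"
    unfolding gstep_def by auto
  with False assms show ?thesis
    by (auto simp: reduced_snoc)
qed

lemma gstep_gstep:
  assumes "reduced w"
  shows "gstep (gstep w a) a = w"
proof (cases "w \<noteq> [] \<and> last w = a")
  case True
  then have w: "w = butlast w @ [a]"
    by (metis append_butlast_last_id)
  then have "\<not> (butlast w \<noteq> [] \<and> last (butlast w) = a)"
    using assms by (metis reduced_snoc)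
  then show ?thesis
    using True w by (auto simp: gstep_def)
qed (auto simp: gstep_def)

lemma reduced_foldl_gstep: "reduced g \<Longrightarrow> set h \<subseteq> {0,1,2} \<Longrightarrow> reduced (foldl gstep g h)"
  by (induction h arbitrary: g) (auto simp: reduced_gstep)

lemma foldl_gstep_gstep:
  assumes "reduced g" "reduced h"
  shows "foldl gstep g (gstep h a) = gstep (foldl gstep g h) a"
proof (cases "h \<noteq> [] \<and> last h = a")
  case True
  then have h: "h = butlast h @ [a]"
    by (metis append_butlast_last_id)
  then have "reduced (butlast h)"
    using assms(2) by (metis reduced_snoc)
  then have "reduced (foldl gstep g (butlast h))"
    using assms(1) reduced_foldl_gstep set_reduced by blast
  then have "foldl gstep g (butlast h) = gstep (foldl gstep g h) a"
    by (subst h) (simp add: gstep_gstep)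
  then show ?thesis
    using True by (simp add: gstep_def)
qed (auto simp: gstep_def)

lemma foldl_gstep_assoc:
  assumes "reduced g" "reduced h" "set k \<subseteq> {0,1,2}"
  shows "foldl gstep g (foldl gstep h k) = foldl gstep (foldl gstep g h) k"
  using assms(3)
proof (induction k rule: rev_induct)
  case (snoc a k)
  have "foldl gstep g (foldl gstep h (k @ [a])) = gstep (foldl gstep g (foldl gstep h k)) a"
    using assms snoc.prems by (simp add: foldl_gstep_gstep reduced_foldl_gstep)
  then show ?case
    using snoc by simp
qed simp

lemma foldl_gstep_Nil: "reduced w \<Longrightarrow> foldl gstep [] w = w"
  by (induction w rule: rev_induct) (auto simp: reduced_snoc gstep_def)

lemma foldl_gstep_rev: "foldl gstep w (rev w) = []"
  by (induction w rule: rev_induct) (simp_all add: gstep_def)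

lemma carrier_G2: "carrier G2 = {w. reduced w}"
  by (simp add: G2_def)

lemma mult_G2: "g \<otimes>\<^bsub>G2\<^esub> h = foldl gstep g h"
  by (simp add: G2_def gmul_def)

lemma one_G2: "\<one>\<^bsub>G2\<^esub> = []"
  by (simp add: G2_def)

lemma group_G2: "group G2"
proof (rule groupI)
  fix x y z
  assume "x \<in> carrier G2" "y \<in> carrier G2" "z \<in> carrier G2"
  then have "reduced x" "reduced y" "set y \<subseteq> {0,1,2}" "set z \<subseteq> {0,1,2}"
    by (metis carrier_G2 mem_Collect_eq set_reduced)+
  then show "x \<otimes>\<^bsub>G2\<^esub> y \<in> carrier G2"
    and "x \<otimes>\<^bsub>G2\<^esub> y \<otimes>\<^bsub>G2\<^esub> z = x \<otimes>\<^bsub>G2\<^esub> (y \<otimes>\<^bsub>G2\<^esub> z)"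
    by (simp_all add: carrier_G2 mult_G2 reduced_foldl_gstep foldl_gstep_assoc)
next
  fix x
  assume "x \<in> carrier G2"
  then show "\<one>\<^bsub>G2\<^esub> \<otimes>\<^bsub>G2\<^esub> x = x" and "\<exists>y\<in>carrier G2. y \<otimes>\<^bsub>G2\<^esub> x = \<one>\<^bsub>G2\<^esub>"
    using foldl_gstep_rev[of "rev x"] reduced_rev[of x]
    by (auto simp: carrier_G2 mult_G2 one_G2 foldl_gstep_Nil)
qed (simp add: carrier_G2 one_G2)

text \<open>Homomorphisms to the group of truth values under \<open>(\<longleftrightarrow>)\<close>, i.e. to Z/2; the kernel
  of p is the set where p holds.\<close>

definition parity_hom :: "('a, 'b) monoid_scheme \<Rightarrow> ('a \<Rightarrow> bool) \<Rightarrow> bool" where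
  "parity_hom G p \<longleftrightarrow>
     (\<forall>g\<in>carrier G. \<forall>h\<in>carrier G. p (g \<otimes>\<^bsub>G\<^esub> h) \<longleftrightarrow> (p g \<longleftrightarrow> p h))"

context group
begin

lemma parity_hom_inv:
  assumes "parity_hom G p" "g \<in> carrier G"
  shows "p (inv g) \<longleftrightarrow> p g"
proof -
  have "p (\<one> \<otimes> \<one>) \<longleftrightarrow> (p \<one> \<longleftrightarrow> p \<one>)" and "p (inv g \<otimes> g) \<longleftrightarrow> (p (inv g) \<longleftrightarrow> p g)"
    using assms unfolding parity_hom_def by blast+
  then show ?thesis
    using assms(2) by simp
qed

lemma subgroup_parity_kernel:
  assumes "parity_hom G p"
  shows "subgroup {g \<in> carrier G. p g} G"
  by (rule subgroupI) (use assms parity_hom_inv in \<open>auto simp: parity_hom_def\<close>)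

lemma r_coset_parity_kernel:
  assumes p: "parity_hom G p" and a: "a \<in> carrier G"
  shows "{g \<in> carrier G. p g} #> a = {w \<in> carrier G. p w \<longleftrightarrow> p a}"
proof
  show "{g \<in> carrier G. p g} #> a \<subseteq> {w \<in> carrier G. p w \<longleftrightarrow> p a}"
    using assms by (auto simp: r_coset_def parity_hom_def)
next
  show "{w \<in> carrier G. p w \<longleftrightarrow> p a} \<subseteq> {g \<in> carrier G. p g} #> a"
  proof
    fix w
    assume "w \<in> {w \<in> carrier G. p w \<longleftrightarrow> p a}"
    then have "w \<otimes> inv a \<in> {g \<in> carrier G. p g}" and "w = (w \<otimes> inv a) \<otimes> a"
      using assms parity_hom_inv[OF p a] by (auto simp: m_assoc parity_hom_def)
    then show "w \<in> {g \<in> carrier G. p g} #> a"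
      unfolding r_coset_def by blast
  qed
qed

lemma card_rcosets_parity_kernel:
  assumes "parity_hom G p"
  shows "finite (rcosets {g \<in> carrier G. p g})" and "card (rcosets {g \<in> carrier G. p g}) \<le> 2"
proof -
  have sub: "rcosets {g \<in> carrier G. p g} \<subseteq> {{w \<in> carrier G. p w}, {w \<in> carrier G. \<not> p w}}"
    using r_coset_parity_kernel[OF assms] by (auto simp: RCOSETS_def)
  then show "finite (rcosets {g \<in> carrier G. p g})"
    by (rule finite_subset) simp
  have "card {{w \<in> carrier G. p w}, {w \<in> carrier G. \<not> p w}} \<le> 2"
    by (rule card_insert_le_m1) auto
  with sub show "card (rcosets {g \<in> carrier G. p g}) \<le> 2"
    by (meson card_mono finite.emptyI finite.insertI order_trans)
qed

end

definition letter_count :: "nat set \<Rightarrow> nat list \<Rightarrow> nat" where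
  "letter_count S w = length (filter (\<lambda>c. c \<in> S) w)"

lemma even_letter_count_gstep:
  "even (letter_count S (gstep w a)) \<longleftrightarrow> (even (letter_count S w) \<longleftrightarrow> a \<notin> S)"
  by (cases w rule: rev_cases) (auto simp: gstep_def letter_count_def)

lemma parity_hom_letter_count: "parity_hom G2 (\<lambda>w. even (letter_count S w))"
  unfolding parity_hom_def mult_G2
proof (intro ballI)
  show "even (letter_count S (foldl gstep g h)) \<longleftrightarrow>
      (even (letter_count S g) \<longleftrightarrow> even (letter_count S h))" for g h
  proof (induction h arbitrary: g)
    case (Cons a h)
    then show ?case
      using even_letter_count_gstep[of S g a] by (auto simp: letter_count_def)
  qed (simp add: letter_count_def)
qed

lemma periodic_le2_letter_parity: "periodic_le2 (\<lambda>w. f (even (letter_count S w)))"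
proof -
  let ?H = "{g \<in> carrier G2. even (letter_count S g)}"
  interpret group G2
    by (rule group_G2)
  have "subgroup ?H G2" "finite (rcosets\<^bsub>G2\<^esub> ?H)" "card (rcosets\<^bsub>G2\<^esub> ?H) \<le> 2"
    using subgroup_parity_kernel card_rcosets_parity_kernel parity_hom_letter_count by auto
  moreover have "\<forall>g\<in>?H. \<forall>h\<in>carrier G2.
      f (even (letter_count S (g \<otimes>\<^bsub>G2\<^esub> h))) = f (even (letter_count S h))"
    using parity_hom_letter_count[of S] by (simp add: parity_hom_def)
  ultimately show ?thesis
    unfolding periodic_le2_def by blast
qed

definition parity_config :: "nat set \<Rightarrow> nat list \<Rightarrow> int \<Rightarrow> nat list \<Rightarrow> int" where
  "parity_config S x c w =
     (if even (letter_count S w) \<longleftrightarrow> even (letter_count S x) then c else - c)"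

lemma parity_config_center [simp]: "parity_config S x c x = c"
  by (simp add: parity_config_def)

lemma parity_config_gstep:
  "parity_config S x c (gstep y a) =
     (if a \<in> S then - parity_config S x c y else parity_config S x c y)"
  using even_letter_count_gstep[of S y a] by (auto simp: parity_config_def)

lemma periodic_le2_parity_config: "periodic_le2 (parity_config S x c)"
  using periodic_le2_letter_parity[of "\<lambda>b. if b \<longleftrightarrow> even (letter_count S x) then c else - c" S]
  by (simp add: parity_config_def [abs_def])

lemma agree_count_parity_config:
  assumes "c \<noteq> 0"
  shows "agree_count (parity_config S x c) y = card ({0,1,2} - S)"
proof -
  have "parity_config S x c y \<noteq> 0"
    using assms by (simp add: parity_config_def)
  then have "{a \<in> {0,1,2}. parity_config S x c (gstep y a) = parity_config S x c y} = {0,1,2} - S"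
    by (auto simp: parity_config_gstep)
  then show ?thesis
    by (simp add: agree_count_def)
qed

definition sign_changes :: "(nat list \<Rightarrow> int) \<Rightarrow> nat list \<Rightarrow> nat set" where
  "sign_changes \<sigma> x = {a \<in> {0,1,2}. \<sigma> (gstep x a) \<noteq> \<sigma> x}"

lemma agree_count_eq_card_sign_changes: "agree_count \<sigma> x = card ({0,1,2} - sign_changes \<sigma> x)"
proof -
  have "{a \<in> {0,1,2}. \<sigma> (gstep x a) = \<sigma> x} = {0,1,2} - sign_changes \<sigma> x"
    unfolding sign_changes_def by auto
  then show ?thesis
    by (simp add: agree_count_def)
qed

lemma parity_config_sign_changes_unit_ball:
  assumes signs: "\<forall>y\<in>unit_ball x. \<sigma> y \<in> {-1,1}" and y: "y \<in> unit_ball x"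
  shows "parity_config (sign_changes \<sigma> x) x (\<sigma> x) y = \<sigma> y"
proof -
  consider "y = x" | a where "a \<in> {0,1,2}" "y = gstep x a"
    using y unfolding unit_ball_def by blast
  then show ?thesis
  proof cases
    case 2
    have "\<sigma> x \<in> {-1,1}" and "\<sigma> y \<in> {-1,1}"
      using signs y by (auto simp: unit_ball_def)
    then have "\<sigma> y = (if a \<in> sign_changes \<sigma> x then - \<sigma> x else \<sigma> x)"
      using 2 unfolding sign_changes_def by auto
    then show ?thesis
      using 2 by (simp add: parity_config_gstep)
  qed simp
qed

theorem lemma3p2:
  fixes i :: nat and x :: "nat list" and \<sigma> :: "nat list \<Rightarrow> int"
  assumes "i \<in> {1,2,3,4}"
    and "x \<in> carrier G2"
    and "\<forall>y\<in>unit_ball x. \<sigma> y \<in> {-1,1}"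
    and "in_class i \<sigma> x"
  shows "\<exists>\<phi> :: nat list \<Rightarrow> int.
           (\<forall>y\<in>carrier G2. \<phi> y \<in> {-1,1}) \<and> periodic_le2 \<phi> \<and>
           (\<forall>y\<in>carrier G2. in_class i \<phi> y) \<and>
           (\<forall>y\<in>unit_ball x. \<phi> y = \<sigma> y)"
proof -
  \<comment> \<open>The construction works for every word x and every i.\<close>
  let ?\<phi> = "parity_config (sign_changes \<sigma> x) x (\<sigma> x)"
  have center: "\<sigma> x \<in> {-1,1}"
    using assms(3) by (simp add: unit_ball_def)
  then have "agree_count ?\<phi> y = card ({0,1,2} - sign_changes \<sigma> x)" for y
    by (intro agree_count_parity_config) auto
  then have "agree_count ?\<phi> y = agree_count \<sigma> x" for y
    by (simp add: agree_count_eq_card_sign_changes)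
  then have "in_class i ?\<phi> y" for y
    using assms(4) by (simp add: in_class_def)
  moreover have "?\<phi> y \<in> {-1,1}" for y
    using center by (auto simp: parity_config_def)
  ultimately show ?thesis
    using periodic_le2_parity_config parity_config_sign_changes_unit_ball[OF assms(3)] by blast
qed

end
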